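(* For each $k\in\mathbb{N}$ there is a graph of treewidth at most $k$ that contains every graph of treewidth at most $k$ as an induced subgraph.
   Context: All graphs are simple and countable. Treewidth is defined via tree-decompositions (bags indexed by a tree, each edge contained in a bag, each vertex's bags forming a nonempty subtree; width = maximum bag size minus one; treewidth = minimum width). *)

theory Defs
  imports Main "HOL-Library.Countable_Set"
begin

definition simple_graph :: "'a set \<Rightarrow> ('a \<Rightarrow> 'a \<Rightarrow> bool) \<Rightarrow> bool" where
  "simple_graph V E \<longleftrightarrow>
     (\<forall>u v. E u v \<longrightarrow> u \<in> V \<and> v \<in> V \<and> u \<noteq> v \<and> E v u)"

definition is_walk :: "('a \<Rightarrow> 'a \<Rightarrow> bool) \<Rightarrow> 'a list \<Rightarrow> bool" where
  "is_walk E p \<longleftrightarrow> p \<noteq> [] \<and> (\<forall>i. Suc i < length p \<longrightarrow> E (p ! i) (p ! Suc i))"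

definition connected_set :: "('a \<Rightarrow> 'a \<Rightarrow> bool) \<Rightarrow> 'a set \<Rightarrow> bool" where
  "connected_set E S \<longleftrightarrow>
     (\<forall>x\<in>S. \<forall>y\<in>S. \<exists>p. is_walk E p \<and> hd p = x \<and> last p = y \<and> set p \<subseteq> S)"

definition has_cycle :: "('a \<Rightarrow> 'a \<Rightarrow> bool) \<Rightarrow> bool" where
  "has_cycle E \<longleftrightarrow>
     (\<exists>p. length p \<ge> 3 \<and> distinct p \<and> is_walk E p \<and> E (last p) (hd p))"

definition is_tree :: "'a set \<Rightarrow> ('a \<Rightarrow> 'a \<Rightarrow> bool) \<Rightarrow> bool" where
  "is_tree I A \<longleftrightarrow> simple_graph I A \<and> I \<noteq> {} \<and> connected_set A I \<and> \<not> has_cycle A"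

definition tree_decomposition ::
  "'a set \<Rightarrow> ('a \<Rightarrow> 'a \<Rightarrow> bool) \<Rightarrow> 't set \<Rightarrow> ('t \<Rightarrow> 't \<Rightarrow> bool) \<Rightarrow> ('t \<Rightarrow> 'a set) \<Rightarrow> bool" where
  "tree_decomposition V E I A B \<longleftrightarrow>
     is_tree I A \<and>
     (\<forall>t\<in>I. B t \<subseteq> V) \<and>
     (\<forall>u v. E u v \<longrightarrow> (\<exists>t\<in>I. u \<in> B t \<and> v \<in> B t)) \<and>
     (\<forall>v\<in>V. {t\<in>I. v \<in> B t} \<noteq> {} \<and> connected_set A {t\<in>I. v \<in> B t})"

definition width_le :: "'t set \<Rightarrow> ('t \<Rightarrow> 'a set) \<Rightarrow> nat \<Rightarrow> bool" where
  "width_le I B k \<longleftrightarrow> (\<forall>t\<in>I. finite (B t) \<and> card (B t) \<le> k + 1)"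

text \<open>Treewidth at most k (the minimum width is at most k iff some decomposition has
  width at most k).  Decomposition trees are indexed by natural numbers; for countable
  graphs this is no restriction.\<close>
definition treewidth_le :: "'a set \<Rightarrow> ('a \<Rightarrow> 'a \<Rightarrow> bool) \<Rightarrow> nat \<Rightarrow> bool" where
  "treewidth_le V E k \<longleftrightarrow>
     (\<exists>(I::nat set) A B. tree_decomposition V E I A B \<and> width_le I B k)"

definition induced_subgraph_of ::
  "'a set \<Rightarrow> ('a \<Rightarrow> 'a \<Rightarrow> bool) \<Rightarrow> 'b set \<Rightarrow> ('b \<Rightarrow> 'b \<Rightarrow> bool) \<Rightarrow> bool" where
  "induced_subgraph_of V E W F \<longleftrightarrow>
     (\<exists>f. inj_on f V \<and> f ` V \<subseteq> W \<and> (\<forall>u\<in>V. \<forall>v\<in>V. E u v \<longleftrightarrow> F (f u) (f v)))"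

end

theory Submission
  imports Defs "HOL-Library.Nat_Bijection"
begin

(* First, treewidth at most k is the same as having a chordal supergraph H
   and a well-founded linear order of the vertices in which the earlier H-neighbours of every
   vertex form a clique of at most k vertices: order the vertices by the depth of the highest
   bag containing them, and conversely take as bags the vertices with their earlier neighbours.
   Second, such elimination orders can be coded by natural numbers: a vertex is coded by its
   name, the codes of its earlier H-neighbours and the codes of its earlier E-neighbours.  The
   graph on all well-formed codes has an elimination order of width k itself (codes are larger
   than the codes they mention), and recursion along the order embeds every graph with an
   elimination order of width k into it as an induced subgraph. *)

section \<open>Walks and connected sets\<close>

lemma simple_graph_symp: "simple_graph V E \<Longrightarrow> symp E"
  by (auto simp: simple_graph_def intro: sympI)

lemma is_walk_Nil [simp]: "\<not> is_walk E []"
  by (simp add: is_walk_def)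

lemma is_walk_single [simp]: "is_walk E [x]"
  by (simp add: is_walk_def)

lemma is_walk_Cons_Cons [simp]: "is_walk E (x # y # p) \<longleftrightarrow> E x y \<and> is_walk E (y # p)"
  unfolding is_walk_def by (auto simp: less_Suc_eq_0_disj)

lemma is_walk_ConsI: "E x (hd p) \<Longrightarrow> is_walk E p \<Longrightarrow> is_walk E (x # p)"
  by (cases p) simp_all

lemma is_walk_append_iff:
  assumes "xs \<noteq> []" "ys \<noteq> []"
  shows "is_walk E (xs @ ys) \<longleftrightarrow> is_walk E xs \<and> E (last xs) (hd ys) \<and> is_walk E ys"
  using assms(1)
proof (induction xs rule: induct_list012)
  case (2 x)
  then show ?case using assms(2) by (cases ys) auto
qed auto

lemma is_walk_rev:
  assumes "symp E" "is_walk E p"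
  shows "is_walk E (rev p)"
  using assms(2)
proof (induction p rule: induct_list012)
  case (3 x y zs)
  then have "is_walk E (rev (y # zs))" "E y x" using assms(1) by (auto dest: sympD)
  then show ?case
    using is_walk_append_iff[of "rev (y # zs)" "[x]" E] by (simp add: last_rev)
qed auto

lemma is_walk_map_upt:
  assumes "\<And>i. Suc i < n \<Longrightarrow> E (f i) (f (Suc i))" "0 < n"
  shows "is_walk E (map f [0..<n])"
  using assms by (auto simp: is_walk_def)

definition reachable_in :: "('a \<Rightarrow> 'a \<Rightarrow> bool) \<Rightarrow> 'a set \<Rightarrow> 'a \<Rightarrow> 'a \<Rightarrow> bool" where
  "reachable_in E S x y \<longleftrightarrow> (\<exists>p. is_walk E p \<and> hd p = x \<and> last p = y \<and> set p \<subseteq> S)"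

lemma connected_set_iff_reachable_in:
  "connected_set E S \<longleftrightarrow> (\<forall>x\<in>S. \<forall>y\<in>S. reachable_in E S x y)"
  by (simp add: connected_set_def reachable_in_def)

lemma reachable_in_refl: "x \<in> S \<Longrightarrow> reachable_in E S x x"
  unfolding reachable_in_def by (rule exI[of _ "[x]"]) auto

lemma reachable_in_step:
  assumes "E x y" "x \<in> S" "reachable_in E S y z"
  shows "reachable_in E S x z"
proof -
  obtain p where "is_walk E p" "hd p = y" "last p = z" "set p \<subseteq> S"
    using assms(3) unfolding reachable_in_def by blast
  then show ?thesis
    unfolding reachable_in_def using assms(1,2) by (intro exI[of _ "x # p"]) (auto intro: is_walk_ConsI)
qed

lemma reachable_in_trans:
  assumes "reachable_in E S x y" "reachable_in E S y z"
  shows "reachable_in E S x z"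
proof -
  obtain p where "is_walk E p" "hd p = x" "last p = y" "set p \<subseteq> S"
    using assms(1) unfolding reachable_in_def by blast
  then show ?thesis
  proof (induction p arbitrary: x rule: induct_list012)
    case (2 a)
    then show ?case using assms(2) by simp
  next
    case (3 a b p)
    then show ?case using reachable_in_step[of E a b S z] by auto
  qed simp
qed

lemma reachable_in_sym:
  assumes "symp E" "reachable_in E S x y"
  shows "reachable_in E S y x"
proof -
  obtain p where "is_walk E p" "hd p = x" "last p = y" "set p \<subseteq> S"
    using assms(2) unfolding reachable_in_def by blast
  moreover have "p \<noteq> []" using \<open>is_walk E p\<close> by auto
  ultimately show ?thesis
    unfolding reachable_in_def using is_walk_rev[OF assms(1)]
    by (intro exI[of _ "rev p"]) (auto simp: hd_rev last_rev)
qed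

lemma connected_setI_hub:
  assumes "symp E" "c \<in> S" "\<And>x. x \<in> S \<Longrightarrow> reachable_in E S x c"
  shows "connected_set E S"
  unfolding connected_set_iff_reachable_in
  using assms reachable_in_trans reachable_in_sym by metis

lemma cycle_adjacent:
  assumes "is_walk E p" "E (last p) (hd p)" "j < length p"
  shows "E (p ! j) (p ! (Suc j mod length p))"
proof (cases "Suc j < length p")
  case True
  then show ?thesis using assms(1) unfolding is_walk_def by simp
next
  case False
  then have "Suc j = length p" using assms(3) by simp
  moreover have "p \<noteq> []" using assms(1) by auto
  ultimately show ?thesis using assms(2)
    by (simp add: last_conv_nth hd_conv_nth del: One_nat_def) (metis diff_Suc_1)
qed

text \<open>In a cycle the largest vertex has two distinct neighbours, which would both have to be
  its parent.\<close>

lemma not_has_cycle_if_edges_descend: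
  fixes A :: "'a::linorder \<Rightarrow> 'a \<Rightarrow> bool"
  assumes edge: "\<And>x y. A x y \<Longrightarrow> y = par x \<and> y < x \<or> x = par y \<and> x < y"
  shows "\<not> has_cycle A"
proof
  assume "has_cycle A"
  then obtain p where p: "length p \<ge> 3" "distinct p" "is_walk A p" "A (last p) (hd p)"
    unfolding has_cycle_def by blast
  define n where "n = length p"
  have "Max (set p) \<in> set p" using p(1) by (intro Max_in) auto
  then obtain i where i: "i < n" "p ! i = Max (set p)" by (auto simp: n_def in_set_conv_nth)
  then have top: "y \<le> p ! i" if "y \<in> set p" for y using that by simp
  define j where "j = (if i = 0 then n - 1 else i - 1)"
  have j: "j < n" "Suc j mod n = i" "j \<noteq> Suc i mod n" "Suc i mod n < n"
    using i(1) p(1) by (auto simp: j_def n_def mod_Suc)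
  have "A (p ! j) (p ! i)" "A (p ! i) (p ! (Suc i mod n))"
    using cycle_adjacent[OF p(3,4)] i(1) j by (metis n_def)+
  moreover have "p ! j \<in> set p" "p ! (Suc i mod n) \<in> set p" using j by (auto simp: n_def)
  ultimately have "p ! j = par (p ! i)" "p ! (Suc i mod n) = par (p ! i)"
    using edge top by (metis not_less)+
  then show False using p(2) j by (metis n_def nth_eq_iff_index_eq)
qed

section \<open>Elimination orders yield tree-decompositions\<close>

definition back_nbrs :: "('a \<Rightarrow> 'a \<Rightarrow> bool) \<Rightarrow> ('a \<Rightarrow> 'a \<Rightarrow> bool) \<Rightarrow> 'a \<Rightarrow> 'a set" where
  "back_nbrs H before v = {u. H u v \<and> before u v}"

definition elimination_order ::
  "'a set \<Rightarrow> ('a \<Rightarrow> 'a \<Rightarrow> bool) \<Rightarrow> ('a \<Rightarrow> 'a \<Rightarrow> bool) \<Rightarrow> nat \<Rightarrow> bool" where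
  "elimination_order V H before k \<longleftrightarrow>
     (\<forall>v\<in>V. finite (back_nbrs H before v) \<and> card (back_nbrs H before v) \<le> k \<and>
            (\<forall>a\<in>back_nbrs H before v. \<forall>b\<in>back_nbrs H before v. a \<noteq> b \<longrightarrow> H a b))"

lemma back_nbrs_subset: "simple_graph V H \<Longrightarrow> back_nbrs H before v \<subseteq> V"
  by (auto simp: simple_graph_def back_nbrs_def)

lemma finite_back_nbrs:
  assumes "simple_graph V H" "elimination_order V H before k"
  shows "finite (back_nbrs H before v)"
proof (cases "v \<in> V")
  case False
  then have "back_nbrs H before v = {}" using assms(1) by (auto simp: simple_graph_def back_nbrs_def)
  then show ?thesis by simp
qed (use assms(2) in \<open>simp add: elimination_order_def\<close>)

locale nat_elimination_order =
  fixes V :: "nat set" and H :: "nat \<Rightarrow> nat \<Rightarrow> bool" and k :: nat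
  assumes simple: "simple_graph V H" and order: "elimination_order V H (<) k"
begin

abbreviation N :: "nat \<Rightarrow> nat set" where "N \<equiv> back_nbrs H (<)"

lemma finite_N: "finite (N v)"
  using finite_back_nbrs[OF simple order] .

lemma N_subset: "N v \<subseteq> V"
  using back_nbrs_subset[OF simple] .

lemma N_less: "u \<in> N v \<Longrightarrow> u < v"
  by (simp add: back_nbrs_def)

lemma card_N: "v \<in> V \<Longrightarrow> card (N v) \<le> k"
  using order by (simp add: elimination_order_def)

lemma N_clique: "v \<in> V \<Longrightarrow> a \<in> N v \<Longrightarrow> b \<in> N v \<Longrightarrow> a \<noteq> b \<Longrightarrow> H a b"
  using order by (simp add: elimination_order_def)

text \<open>The decomposition tree has root 0 with empty bag and a node Suc v for every
  vertex v, carrying v and its earlier neighbours and hanging below the node of the latest of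
  them.\<close>

definition nodes :: "nat set" where
  "nodes = insert 0 (Suc ` V)"

definition up :: "nat \<Rightarrow> nat" where
  "up t = (if N (t - 1) = {} then 0 else Suc (Max (N (t - 1))))"

definition tree_edge :: "nat \<Rightarrow> nat \<Rightarrow> bool" where
  "tree_edge s t \<longleftrightarrow> s \<in> nodes \<and> t \<in> nodes \<and> (s \<noteq> 0 \<and> t = up s \<or> t \<noteq> 0 \<and> s = up t)"

definition bag :: "nat \<Rightarrow> nat set" where
  "bag t = (if t = 0 then {} else insert (t - 1) (N (t - 1)))"

lemma up_less: "t \<noteq> 0 \<Longrightarrow> up t < t"
  using Max_in[OF finite_N] N_less by (fastforce simp: up_def)

lemma up_in_nodes: "up t \<in> nodes"
  using Max_in[OF finite_N] N_subset by (auto simp: up_def nodes_def)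

lemma up_Suc_Max: "v \<in> N w \<Longrightarrow> up (Suc w) = Suc (Max (N w))"
  by (auto simp: up_def)

lemma reachable_in_root: "t \<in> nodes \<Longrightarrow> reachable_in tree_edge nodes t 0"
proof (induction t rule: less_induct)
  case (less t)
  show ?case
  proof (cases "t = 0")
    case False
    then have "tree_edge t (up t)" using less.prems up_in_nodes by (simp add: tree_edge_def)
    moreover have "reachable_in tree_edge nodes (up t) 0"
      using less.IH up_less[OF False] up_in_nodes by blast
    ultimately show ?thesis using less.prems reachable_in_step by metis
  qed (use less.prems in \<open>simp add: reachable_in_refl\<close>)
qed

lemma is_tree_nodes: "is_tree nodes tree_edge"
proof -
  have simple_tree: "simple_graph nodes tree_edge"
    unfolding simple_graph_def
  proof (intro allI impI)
    fix s t assume "tree_edge s t"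
    then show "s \<in> nodes \<and> t \<in> nodes \<and> s \<noteq> t \<and> tree_edge t s"
      using up_less[of s] up_less[of t] unfolding tree_edge_def by auto
  qed
  have "connected_set tree_edge nodes"
  proof (rule connected_setI_hub[OF simple_graph_symp[OF simple_tree]])
    show "0 \<in> nodes" by (simp add: nodes_def)
  qed (rule reachable_in_root)
  moreover have "\<not> has_cycle tree_edge"
    by (rule not_has_cycle_if_edges_descend[where par = up]) (use up_less in \<open>auto simp: tree_edge_def\<close>)
  ultimately show ?thesis using simple_tree by (simp add: is_tree_def nodes_def)
qed

text \<open>Since the earlier neighbours of w form a clique, the vertex v is either the latest of
  them or an earlier neighbour of it; so the bags containing v form a path up to the node of v.\<close>

lemma reachable_in_bags:
  assumes v: "v \<in> V"
  shows "w \<in> V \<Longrightarrow> v \<in> N w \<or> v = w \<Longrightarrow> reachable_in tree_edge {t \<in> nodes. v \<in> bag t} (Suc w) (Suc v)"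
proof (induction w rule: less_induct)
  case (less w)
  let ?S = "{t \<in> nodes. v \<in> bag t}"
  show ?case
  proof (cases "v = w")
    case True
    then show ?thesis using v by (simp add: reachable_in_refl nodes_def bag_def)
  next
    case False
    then have vN: "v \<in> N w" using less.prems by auto
    define q where "q = Max (N w)"
    have qN: "q \<in> N w" using Max_in[OF finite_N] vN by (auto simp: q_def)
    have "v \<le> q" using finite_N vN by (simp add: q_def)
    then have "v \<in> N q \<or> v = q"
      using N_clique[OF less.prems(1) vN qN] vN qN by (auto simp: back_nbrs_def)
    then have "reachable_in tree_edge ?S (Suc q) (Suc v)"
      using less.IH N_less[OF qN] N_subset qN by blast
    moreover have "tree_edge (Suc w) (Suc q)"
      using up_Suc_Max[OF vN] qN N_subset less.prems(1) by (auto simp: tree_edge_def q_def nodes_def)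
    moreover have "Suc w \<in> ?S" using less.prems(1) vN by (simp add: nodes_def bag_def)
    ultimately show ?thesis by (blast intro: reachable_in_step)
  qed
qed

lemma tree_decomposition_bags:
  assumes E_H: "\<And>u v. E u v \<Longrightarrow> H u v"
  shows "tree_decomposition V E nodes tree_edge bag"
  unfolding tree_decomposition_def
proof (intro conjI ballI allI impI)
  show "is_tree nodes tree_edge" by (rule is_tree_nodes)
next
  fix t assume "t \<in> nodes"
  then show "bag t \<subseteq> V" using N_subset by (auto simp: nodes_def bag_def)
next
  fix u v assume "E u v"
  then have "H u v" "H v u" "u \<noteq> v" "u \<in> V" "v \<in> V"
    using E_H simple by (auto simp: simple_graph_def)
  then show "\<exists>t\<in>nodes. u \<in> bag t \<and> v \<in> bag t"
    by (cases "u < v")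
      (force simp: nodes_def bag_def back_nbrs_def intro: bexI[of _ "Suc v"] bexI[of _ "Suc u"])+
next
  fix v assume v: "v \<in> V"
  let ?S = "{t \<in> nodes. v \<in> bag t}"
  have top: "Suc v \<in> ?S" using v by (simp add: nodes_def bag_def)
  then show "?S \<noteq> {}" by blast
  have "symp tree_edge" using is_tree_nodes by (auto simp: is_tree_def intro: simple_graph_symp)
  moreover have "reachable_in tree_edge ?S t (Suc v)" if "t \<in> ?S" for t
  proof -
    have "t \<noteq> 0" using that by (cases "t = 0") (auto simp: bag_def)
    moreover have "t \<in> nodes" using that by blast
    ultimately obtain w where w: "w \<in> V" "t = Suc w" by (auto simp: nodes_def)
    moreover have "v \<in> N w \<or> v = w" using that w by (auto simp: bag_def)
    ultimately show ?thesis using reachable_in_bags[OF v] by blast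
  qed
  ultimately show "connected_set tree_edge ?S" by (rule connected_setI_hub[OF _ top])
qed

lemma width_le_bags: "width_le nodes bag k"
  unfolding width_le_def
proof
  fix t assume "t \<in> nodes"
  show "finite (bag t) \<and> card (bag t) \<le> k + 1"
  proof (cases "t = 0")
    case False
    then obtain w where w: "w \<in> V" "t = Suc w" using \<open>t \<in> nodes\<close> by (auto simp: nodes_def)
    have "card (insert w (N w)) \<le> Suc (card (N w))" by (simp add: card_insert_le_m1 finite_N)
    then show ?thesis using w finite_N card_N[OF w(1)] by (simp add: bag_def)
  qed (simp add: bag_def)
qed

end

lemma treewidth_le_if_elimination_order:
  fixes V :: "nat set"
  assumes "simple_graph V H" "elimination_order V H (<) k" "\<And>u v. E u v \<Longrightarrow> H u v"
  shows "treewidth_le V E k"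
proof -
  interpret nat_elimination_order V H k using assms(1,2) by unfold_locales
  show ?thesis
    unfolding treewidth_le_def using tree_decomposition_bags[OF assms(3)] width_le_bags by blast
qed

section \<open>The universal graph\<close>

definition code :: "nat \<Rightarrow> nat set \<Rightarrow> nat set \<Rightarrow> nat" where
  "code t F S = prod_encode (t, prod_encode (set_encode F, set_encode S))"

definition code_name :: "nat \<Rightarrow> nat" where
  "code_name x = fst (prod_decode x)"

definition code_clique :: "nat \<Rightarrow> nat set" where
  "code_clique x = set_decode (fst (prod_decode (snd (prod_decode x))))"

definition code_nbrs :: "nat \<Rightarrow> nat set" where
  "code_nbrs x = set_decode (snd (prod_decode (snd (prod_decode x))))"

lemma code_name_code [simp]: "code_name (code t F S) = t"
  by (simp add: code_def code_name_def)

lemma code_clique_code [simp]: "finite F \<Longrightarrow> code_clique (code t F S) = F"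
  by (simp add: code_def code_clique_def)

lemma code_nbrs_code [simp]: "finite S \<Longrightarrow> code_nbrs (code t F S) = S"
  by (simp add: code_def code_nbrs_def)

lemma set_decode_less: "y \<in> set_decode n \<Longrightarrow> y < n"
proof -
  assume "y \<in> set_decode n"
  then have "n div 2 ^ y \<noteq> 0" by (auto simp: set_decode_def dest: odd_pos)
  then have "2 ^ y \<le> n" by (simp add: div_eq_0_iff not_less)
  then show ?thesis using less_exp[of y] by linarith
qed

lemma fst_prod_decode_le: "fst (prod_decode n) \<le> n"
  by (metis le_prod_encode_1 prod.collapse prod_decode_inverse)

lemma snd_prod_decode_le: "snd (prod_decode n) \<le> n"
  by (metis le_prod_encode_2 prod.collapse prod_decode_inverse)

lemma code_clique_less: "y \<in> code_clique x \<Longrightarrow> y < x"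
  unfolding code_clique_def
  using set_decode_less fst_prod_decode_le snd_prod_decode_le by (meson le_trans less_le_trans)

text \<open>A well-formed code records a name t, a set F of at most k earlier well-formed codes that
  is a clique for the relation "is recorded in", and the set S \<subseteq> F of actual neighbours.\<close>

inductive univ_vertex :: "nat \<Rightarrow> nat \<Rightarrow> bool" for k :: nat where
  "finite F \<Longrightarrow> card F \<le> k \<Longrightarrow> \<forall>y\<in>F. univ_vertex k y \<Longrightarrow>
    \<forall>a\<in>F. \<forall>b\<in>F. a < b \<longrightarrow> a \<in> code_clique b \<Longrightarrow> S \<subseteq> F \<Longrightarrow> univ_vertex k (code t F S)"

lemma univ_vertexD:
  assumes "univ_vertex k x"
  shows "finite (code_clique x)" "card (code_clique x) \<le> k"
    "\<And>y. y \<in> code_clique x \<Longrightarrow> univ_vertex k y"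
    "\<And>a b. a \<in> code_clique x \<Longrightarrow> b \<in> code_clique x \<Longrightarrow> a < b \<Longrightarrow> a \<in> code_clique b"
    "code_nbrs x \<subseteq> code_clique x"
  using assms by (cases rule: univ_vertex.cases; simp add: finite_subset)+

definition univ_V :: "nat \<Rightarrow> nat set" where
  "univ_V k = {x. univ_vertex k x}"

definition univ_H :: "nat \<Rightarrow> nat \<Rightarrow> nat \<Rightarrow> bool" where
  "univ_H k x y \<longleftrightarrow> univ_vertex k x \<and> univ_vertex k y \<and> (x \<in> code_clique y \<or> y \<in> code_clique x)"

definition univ_E :: "nat \<Rightarrow> nat \<Rightarrow> nat \<Rightarrow> bool" where
  "univ_E k x y \<longleftrightarrow> univ_vertex k x \<and> univ_vertex k y \<and> (x \<in> code_nbrs y \<or> y \<in> code_nbrs x)"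

lemma simple_graph_univ_H: "simple_graph (univ_V k) (univ_H k)"
  unfolding simple_graph_def univ_H_def univ_V_def using code_clique_less by blast

lemma simple_graph_univ_E: "simple_graph (univ_V k) (univ_E k)"
  unfolding simple_graph_def univ_E_def univ_V_def
  using univ_vertexD(5) code_clique_less by blast

lemma back_nbrs_univ_H:
  assumes "univ_vertex k v"
  shows "back_nbrs (univ_H k) (<) v = code_clique v"
proof -
  have "univ_H k u v \<and> u < v \<longleftrightarrow> u \<in> code_clique v" for u
    using assms univ_vertexD(3)[OF assms, of u] code_clique_less[of u v] code_clique_less[of v u]
    unfolding univ_H_def by auto
  then show ?thesis by (auto simp: back_nbrs_def)
qed

lemma elimination_order_univ_H: "elimination_order (univ_V k) (univ_H k) (<) k"
  unfolding elimination_order_def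
proof
  fix v assume "v \<in> univ_V k"
  then have v: "univ_vertex k v" by (simp add: univ_V_def)
  have "univ_H k a b" if "a \<in> code_clique v" "b \<in> code_clique v" "a \<noteq> b" for a b
    using that univ_vertexD(3,4)[OF v] by (cases "a < b") (auto simp: univ_H_def)
  then show "finite (back_nbrs (univ_H k) (<) v) \<and> card (back_nbrs (univ_H k) (<) v) \<le> k \<and>
      (\<forall>a\<in>back_nbrs (univ_H k) (<) v. \<forall>b\<in>back_nbrs (univ_H k) (<) v. a \<noteq> b \<longrightarrow> univ_H k a b)"
    using univ_vertexD(1,2)[OF v] by (simp add: back_nbrs_univ_H[OF v])
qed

lemma treewidth_le_univ: "treewidth_le (univ_V k) (univ_E k) k"
  by (rule treewidth_le_if_elimination_order[OF simple_graph_univ_H elimination_order_univ_H])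
    (auto simp: univ_E_def univ_H_def dest: univ_vertexD(5))

section \<open>Embedding along an elimination order\<close>

locale elimination_embedding =
  fixes V :: "nat set" and E H before :: "nat \<Rightarrow> nat \<Rightarrow> bool" and k :: nat
  assumes E_graph: "simple_graph V E" and H_graph: "simple_graph V H"
    and E_H: "\<And>u v. E u v \<Longrightarrow> H u v" and wf_before: "wf {(u, v). before u v}"
    and before_total: "\<And>u v. u \<noteq> v \<Longrightarrow> before u v \<or> before v u"
    and order: "elimination_order V H before k"
begin

abbreviation N :: "nat \<Rightarrow> nat set" where "N \<equiv> back_nbrs H before"

text \<open>The name v in the code makes the embedding injective.\<close>

definition embed :: "nat \<Rightarrow> nat" where
  "embed = wfrec {(u, v). before u v} (\<lambda>g v. code v (g ` N v) (g ` {u \<in> N v. E u v}))"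

lemma finite_N: "finite (N v)"
  using finite_back_nbrs[OF H_graph order] .

lemma embed_unfold: "embed v = code v (embed ` N v) (embed ` {u \<in> N v. E u v})"
proof -
  let ?R = "{(u, v). before u v}"
  have "embed v = code v (cut embed ?R v ` N v) (cut embed ?R v ` {u \<in> N v. E u v})"
    unfolding embed_def by (rule wfrec[OF wf_before])
  moreover have "cut embed ?R v ` N v = embed ` N v"
    "cut embed ?R v ` {u \<in> N v. E u v} = embed ` {u \<in> N v. E u v}"
    by (auto simp: cut_apply back_nbrs_def intro!: image_cong)
  ultimately show ?thesis by simp
qed

lemma code_name_embed [simp]: "code_name (embed v) = v"
  by (subst embed_unfold) simp

lemma code_clique_embed [simp]: "code_clique (embed v) = embed ` N v"
  by (subst embed_unfold) (simp add: finite_N)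

lemma code_nbrs_embed [simp]: "code_nbrs (embed v) = embed ` {u \<in> N v. E u v}"
  by (subst embed_unfold) (simp add: finite_N)

lemma inj_embed: "inj embed"
  by (metis code_name_embed injI)

lemma embed_clique:
  assumes v: "v \<in> V" and a: "a \<in> embed ` N v" and b: "b \<in> embed ` N v" and ab: "a < b"
  shows "a \<in> code_clique b"
proof -
  obtain x y where xy: "x \<in> N v" "y \<in> N v" "a = embed x" "b = embed y" using a b by blast
  then have "x \<noteq> y" using ab by auto
  then have "H x y" "H y x"
    using order v xy(1,2) by (auto simp: elimination_order_def)
  show ?thesis
  proof (cases "before x y")
    case True
    then show ?thesis using \<open>H x y\<close> xy by (simp add: back_nbrs_def)
  next
    case False
    then have "b \<in> code_clique a" using before_total[OF \<open>x \<noteq> y\<close>] \<open>H y x\<close> xy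
      by (simp add: back_nbrs_def)
    then show ?thesis using code_clique_less ab by fastforce
  qed
qed

lemma univ_vertex_embed: "v \<in> V \<Longrightarrow> univ_vertex k (embed v)"
proof (induction v rule: wf_induct[OF wf_before])
  case (1 v)
  have "card (embed ` N v) \<le> card (N v)" using card_image_le[OF finite_N] .
  also have "\<dots> \<le> k" using order 1(2) by (simp add: elimination_order_def)
  finally have "card (embed ` N v) \<le> k" .
  moreover have "\<forall>y\<in>embed ` N v. univ_vertex k y"
    using 1 back_nbrs_subset[OF H_graph] by (auto simp: back_nbrs_def)
  ultimately have "univ_vertex k (code v (embed ` N v) (embed ` {u \<in> N v. E u v}))"
    using finite_N embed_clique[OF 1(2)] by (intro univ_vertex.intros) auto
  then show ?case by (subst embed_unfold)
qed

lemma univ_E_embed_iff: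
  assumes "u \<in> V" "v \<in> V"
  shows "univ_E k (embed u) (embed v) \<longleftrightarrow> E u v"
proof -
  have E_sym: "E v u \<longleftrightarrow> E u v" using simple_graph_symp[OF E_graph] by (blast dest: sympD)
  have "E u v \<longleftrightarrow> E u v \<and> before u v \<or> E v u \<and> before v u"
    using before_total[of u v] E_sym E_graph by (auto simp: simple_graph_def)
  also have "\<dots> \<longleftrightarrow> u \<in> {w \<in> N v. E w v} \<or> v \<in> {w \<in> N u. E w u}"
    using E_H by (auto simp: back_nbrs_def)
  also have "\<dots> \<longleftrightarrow> embed u \<in> code_nbrs (embed v) \<or> embed v \<in> code_nbrs (embed u)"
    using inj_embed by (simp add: inj_image_mem_iff)
  finally show ?thesis using univ_vertex_embed assms by (simp add: univ_E_def)
qed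

lemma induced_subgraph_of_univ: "induced_subgraph_of V E (univ_V k) (univ_E k)"
  unfolding induced_subgraph_of_def univ_V_def
proof (intro exI conjI)
  show "inj_on embed V" using inj_embed by (rule inj_on_subset) simp
  show "embed ` V \<subseteq> {x. univ_vertex k x}" using univ_vertex_embed by blast
  show "\<forall>u\<in>V. \<forall>v\<in>V. E u v \<longleftrightarrow> univ_E k (embed u) (embed v)" using univ_E_embed_iff by blast
qed

end

lemma induced_subgraph_of_univ_if_elimination_order:
  fixes V :: "nat set"
  assumes "simple_graph V E" "simple_graph V H" "\<And>u v. E u v \<Longrightarrow> H u v"
    "wf {(u, v). before u v}" "\<And>u v. u \<noteq> v \<Longrightarrow> before u v \<or> before v u"
    "elimination_order V H before k"
  shows "induced_subgraph_of V E (univ_V k) (univ_E k)"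
proof -
  interpret elimination_embedding V E H before k using assms by unfold_locales
  show ?thesis by (rule induced_subgraph_of_univ)
qed

section \<open>Rooted trees\<close>

locale rooted_tree =
  fixes I :: "'t set" and A :: "'t \<Rightarrow> 't \<Rightarrow> bool" and root :: 't
  assumes tree: "is_tree I A" and root_in: "root \<in> I"
begin

lemma edge_in: "A u v \<Longrightarrow> u \<in> I \<and> v \<in> I \<and> u \<noteq> v"
  using tree by (auto simp: is_tree_def simple_graph_def)

lemma symp_A: "symp A"
  using tree by (auto simp: is_tree_def intro: simple_graph_symp)

definition depth :: "'t \<Rightarrow> nat" where
  "depth t = (LEAST n. \<exists>w. is_walk A w \<and> hd w = root \<and> last w = t \<and> length w = Suc n)"

lemma depth_witness:
  assumes "t \<in> I"
  obtains w where "is_walk A w" "hd w = root" "last w = t" "length w = Suc (depth t)"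
proof -
  obtain w where w: "is_walk A w" "hd w = root" "last w = t"
    using tree root_in assms unfolding is_tree_def connected_set_def by blast
  then have "length w = Suc (length w - 1)" by (cases w) auto
  then have "\<exists>n w. is_walk A w \<and> hd w = root \<and> last w = t \<and> length w = Suc n" using w by blast
  from LeastI_ex[OF this] show ?thesis using that unfolding depth_def by blast
qed

lemma depth_less_length:
  assumes "is_walk A w" "hd w = root" "last w = t"
  shows "depth t < length w"
proof -
  have "length w = Suc (length w - 1)" using assms(1) by (cases w) auto
  then have "depth t \<le> length w - 1"
    unfolding depth_def using assms by (intro Least_le) metis
  then show ?thesis using \<open>length w = Suc (length w - 1)\<close> by linarith
qed

lemma depth_root [simp]: "depth root = 0"
  using depth_less_length[of "[root]" root] by simp

lemma depth_eq_0: "t \<in> I \<Longrightarrow> depth t = 0 \<Longrightarrow> t = root"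
  by (metis depth_witness length_0_conv length_Suc_conv list.sel(1) last_ConsL)

lemma depth_edge:
  assumes "A s t"
  shows "depth t \<le> Suc (depth s)"
proof -
  obtain w where w: "is_walk A w" "hd w = root" "last w = s" "length w = Suc (depth s)"
    using depth_witness edge_in[OF assms] by blast
  moreover have "w \<noteq> []" using w(1) by auto
  ultimately have "is_walk A (w @ [t])" using assms is_walk_append_iff[of w "[t]"] by auto
  then show ?thesis using depth_less_length[of "w @ [t]" t] w by (cases w) auto
qed

lemma parent_exists:
  assumes "t \<in> I" "t \<noteq> root"
  shows "\<exists>s. A s t \<and> Suc (depth s) = depth t"
proof -
  obtain w where w: "is_walk A w" "hd w = root" "last w = t" "length w = Suc (depth t)"
    using depth_witness[OF assms(1)] by blast
  have "depth t \<noteq> 0" using depth_eq_0 assms by blast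
  define w' where "w' = butlast w"
  have "length w' = depth t" using w(4) by (simp add: w'_def)
  then have "w' \<noteq> []" using \<open>depth t \<noteq> 0\<close> by auto
  have "w \<noteq> []" using w(1) by auto
  then have "w = w' @ [t]" using w(3) append_butlast_last_id[of w] by (simp add: w'_def)
  then have "is_walk A w'" "A (last w') t" "hd w' = root"
    using w(1,2) \<open>w' \<noteq> []\<close> is_walk_append_iff[OF \<open>w' \<noteq> []\<close>, of "[t]" A] by auto
  then have "depth (last w') < length w'" by (intro depth_less_length) auto
  moreover note \<open>length w' = depth t\<close>
  ultimately have "Suc (depth (last w')) = depth t"
    using depth_edge[OF \<open>A (last w') t\<close>] by linarith
  then show ?thesis using \<open>A (last w') t\<close> by blast
qed

definition parent :: "'t \<Rightarrow> 't" where
  "parent t = (if t = root then root else SOME s. A s t \<and> Suc (depth s) = depth t)"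

lemma parent_root [simp]: "parent root = root"
  by (simp add: parent_def)

lemma parent_edge:
  assumes "t \<in> I" "t \<noteq> root"
  shows "A (parent t) t" "Suc (depth (parent t)) = depth t" "parent t \<in> I"
  using someI_ex[OF parent_exists[OF assms]] assms edge_in by (auto simp: parent_def)

definition ancestor :: "nat \<Rightarrow> 't \<Rightarrow> 't" where
  "ancestor j = parent ^^ j"

lemma ancestor_0 [simp]: "ancestor 0 t = t"
  by (simp add: ancestor_def)

lemma ancestor_Suc: "ancestor (Suc j) t = parent (ancestor j t)"
  by (simp add: ancestor_def)

lemma ancestor_ancestor: "ancestor i (ancestor j t) = ancestor (i + j) t"
  by (simp add: ancestor_def funpow_add)

lemma ancestor_in_depth:
  assumes "t \<in> I" "j \<le> depth t"
  shows "ancestor j t \<in> I \<and> depth (ancestor j t) = depth t - j"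
  using assms(2)
proof (induction j)
  case (Suc j)
  then have j: "ancestor j t \<in> I" "depth (ancestor j t) = depth t - j" by auto
  moreover have "ancestor j t \<noteq> root" using Suc.prems j(2) by auto
  ultimately have "Suc (depth (parent (ancestor j t))) = depth t - j" "parent (ancestor j t) \<in> I"
    using parent_edge by auto
  then show ?case using Suc.prems by (auto simp: ancestor_Suc)
qed (use assms(1) in simp)

lemma ancestor_edge:
  assumes "t \<in> I" "j < depth t"
  shows "A (ancestor (Suc j) t) (ancestor j t)"
proof -
  have "ancestor j t \<in> I" "depth (ancestor j t) = depth t - j"
    using ancestor_in_depth assms by auto
  moreover have "ancestor j t \<noteq> root" using assms(2) calculation(2) by auto
  ultimately show ?thesis using parent_edge by (simp add: ancestor_Suc)
qed

lemma ancestor_inj: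
  assumes "t \<in> I" "i \<le> depth t" "j \<le> depth t" "ancestor i t = ancestor j t"
  shows "i = j"
proof -
  have "depth t - i = depth t - j"
    using ancestor_in_depth[OF assms(1,2)] ancestor_in_depth[OF assms(1,3)] assms(4) by simp
  then show ?thesis using assms(2,3) by linarith
qed

lemma ancestor_depth: "t \<in> I \<Longrightarrow> ancestor (depth t) t = root"
  using ancestor_in_depth depth_eq_0 by simp

lemma is_walk_ancestors:
  assumes "t \<in> I" "n \<le> depth t"
  shows "is_walk A (map (\<lambda>i. ancestor i t) [0..<Suc n])"
proof (rule is_walk_map_upt)
  fix i assume "Suc i < Suc n"
  then have "i < depth t" using assms(2) by simp
  then show "A (ancestor i t) (ancestor (Suc i) t)"
    using ancestor_edge[OF assms(1)] sympD[OF symp_A] by blast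
qed simp

lemma distinct_ancestors:
  assumes "t \<in> I" "n \<le> Suc (depth t)"
  shows "distinct (map (\<lambda>i. ancestor i t) [0..<n])"
proof -
  have "inj_on (\<lambda>i. ancestor i t) {0..<n}"
    using ancestor_inj[OF assms(1)] assms(2) by (auto simp: inj_on_def)
  then show ?thesis by (simp add: distinct_map)
qed

lemma cycle_through_ancestors:
  assumes st: "A s t" and a: "0 < a" "a \<le> depth s" and b: "0 < b" "b \<le> depth t"
    and meet: "ancestor a s = ancestor b t"
    and apart: "\<And>i j. i < a \<Longrightarrow> j < b \<Longrightarrow> ancestor i s \<noteq> ancestor j t"
  shows "has_cycle A"
proof -
  have sI: "s \<in> I" and tI: "t \<in> I" using edge_in[OF st] by auto
  define xs where "xs = map (\<lambda>i. ancestor i s) [0..<Suc a]"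
  define ys where "ys = map (\<lambda>j. ancestor j t) [0..<b]"
  have "is_walk A xs" using is_walk_ancestors[OF sI a(2)] by (simp add: xs_def)
  moreover have "is_walk A (rev ys)"
    using is_walk_rev[OF symp_A is_walk_ancestors[OF tI, of "b - 1"]] b by (simp add: ys_def)
  moreover have "A (last xs) (hd (rev ys))"
    using ancestor_edge[OF tI, of "b - 1"] b meet by (simp add: xs_def ys_def hd_rev last_map)
  ultimately have "is_walk A (xs @ rev ys)"
    using is_walk_append_iff[of xs "rev ys"] b by (simp add: xs_def ys_def)
  moreover have "hd (xs @ rev ys) = s" by (simp add: xs_def hd_map upt_conv_Cons del: upt_Suc)
  moreover have "last (xs @ rev ys) = t" using b by (simp add: ys_def last_rev hd_map)
  moreover note sympD[OF symp_A st]
  moreover have "set xs \<inter> set ys = {}"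
  proof -
    have "ancestor i s \<noteq> ancestor j t" if "i \<le> a" "j < b" for i j
    proof (cases "i < a")
      case False
      then show ?thesis using meet ancestor_inj[OF tI, of b j] that b by auto
    qed (use apart that in blast)
    then show ?thesis by (auto simp: xs_def ys_def)
  qed
  then have "distinct (xs @ rev ys)"
    using distinct_ancestors[OF sI, of "Suc a"] distinct_ancestors[OF tI, of b] a b
    by (simp add: xs_def ys_def)
  moreover have "length (xs @ rev ys) \<ge> 3" using a b by (simp add: xs_def ys_def)
  ultimately show ?thesis unfolding has_cycle_def by metis
qed

lemma ancestor_neq_neighbour:
  assumes "A s t" "s \<noteq> parent t" "j \<le> depth t"
  shows "ancestor j t \<noteq> s"
proof
  assume s: "ancestor j t = s"
  have "t \<in> I" "s \<noteq> t" using edge_in[OF assms(1)] by auto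
  then have "depth s = depth t - j" using ancestor_in_depth assms(3) s by blast
  then have "j \<le> 1" using depth_edge[OF assms(1)] assms(3) by linarith
  then show False using s assms(2) \<open>s \<noteq> t\<close> by (cases j) (auto simp: ancestor_Suc)
qed

text \<open>Otherwise the two ancestor paths of s and t, up to their first common vertex, would
  close a cycle with the edge between s and t.\<close>

lemma edge_parent:
  assumes st: "A s t"
  shows "s = parent t \<or> t = parent s"
proof (rule ccontr)
  assume not_parent: "\<not> (s = parent t \<or> t = parent s)"
  have ts: "A t s" using st symp_A by (blast dest: sympD)
  have sI: "s \<in> I" and tI: "t \<in> I" using edge_in[OF st] by auto
  define meets where "meets a \<longleftrightarrow> a \<le> depth s \<and> (\<exists>b\<le>depth t. ancestor a s = ancestor b t)" for a
  have "meets (depth s)" using ancestor_depth sI tI by (auto simp: meets_def)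
  then obtain a where "meets a" and least: "\<And>i. i < a \<Longrightarrow> \<not> meets i"
    using exists_least_iff[of meets] by blast
  then obtain b where a: "a \<le> depth s" and b: "b \<le> depth t"
    and meet: "ancestor a s = ancestor b t" by (auto simp: meets_def)
  have "a \<noteq> 0" using ancestor_neq_neighbour[OF st _ b] not_parent meet by (metis ancestor_0)
  moreover have "b \<noteq> 0" using ancestor_neq_neighbour[OF ts _ a] not_parent meet by (metis ancestor_0)
  moreover have "ancestor i s \<noteq> ancestor j t" if "i < a" "j < b" for i j
    using least[OF that(1)] that a b by (auto simp: meets_def)
  ultimately have "has_cycle A" using cycle_through_ancestors[OF st _ a _ b meet] by blast
  then show False using tree by (simp add: is_tree_def)
qed

definition below :: "'t \<Rightarrow> 't \<Rightarrow> bool" where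
  "below \<tau> t \<longleftrightarrow> t \<in> I \<and> depth \<tau> \<le> depth t \<and> ancestor (depth t - depth \<tau>) t = \<tau>"

lemma below_edge:
  assumes x: "below \<tau> x" and xy: "A x y" and not_up: "x = \<tau> \<Longrightarrow> y \<noteq> parent \<tau>"
  shows "below \<tau> y"
proof -
  have xI: "x \<in> I" and yI: "y \<in> I" and "x \<noteq> y" using edge_in[OF xy] by auto
  consider "x = parent y" | "y = parent x" "x \<noteq> parent y" using edge_parent[OF xy] by blast
  then show ?thesis
  proof cases
    case 1
    then have "y \<noteq> root" using \<open>x \<noteq> y\<close> by auto
    then have dy: "depth y = Suc (depth x)" using parent_edge[OF yI] 1 by simp
    have "ancestor (depth y - depth \<tau>) y = ancestor (depth x - depth \<tau>) (ancestor 1 y)"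
      using x dy by (simp add: ancestor_ancestor below_def Suc_diff_le)
    also have "\<dots> = \<tau>" using 1 x by (simp add: below_def ancestor_Suc)
    finally show ?thesis using x dy yI by (simp add: below_def)
  next
    case 2
    then have "x \<noteq> root" using \<open>x \<noteq> y\<close> by auto
    then have dx: "depth x = Suc (depth y)" using parent_edge[OF xI] 2 by simp
    have "x \<noteq> \<tau>" using not_up 2 by auto
    then have lt: "depth \<tau> < depth x"
      using x by (metis ancestor_0 below_def diff_self_eq_0 le_neq_implies_less)
    have "ancestor (depth y - depth \<tau>) y = ancestor (depth y - depth \<tau>) (ancestor 1 x)"
      using 2 by (simp add: ancestor_Suc)
    also have "\<dots> = ancestor (depth x - depth \<tau>) x" using lt dx by (simp add: ancestor_ancestor Suc_diff_le)
    also have "\<dots> = \<tau>" using x by (simp add: below_def)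
    finally show ?thesis using dx lt yI by (simp add: below_def)
  qed
qed

lemma walk_below:
  assumes "is_walk A w" "set w \<subseteq> S" "hd w = \<tau>" "\<tau> \<in> I" "parent \<tau> \<notin> S \<or> \<tau> = root"
  shows "\<forall>x\<in>set w. below \<tau> x"
  using assms(1-3)
proof (induction w rule: rev_induct)
  case (snoc y w)
  show ?case
  proof (cases "w = []")
    case True
    then show ?thesis using snoc.prems assms(4) by (simp add: below_def)
  next
    case False
    then have "A (last w) y" "is_walk A w" using is_walk_append_iff[of w "[y]"] snoc.prems by auto
    then have "\<forall>x\<in>set w. below \<tau> x" using snoc False by auto
    moreover have "y \<noteq> parent \<tau>" if "last w = \<tau>"
    proof
      assume "y = parent \<tau>"
      moreover have "y \<in> S" using snoc.prems(2) by simp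
      moreover have "\<tau> \<noteq> y" using edge_in[OF \<open>A (last w) y\<close>] that by simp
      ultimately show False using assms(5) by auto
    qed
    ultimately show ?thesis using below_edge[OF _ \<open>A (last w) y\<close>] False by simp
  qed
qed simp

text \<open>A connected set of nodes hangs from its vertex of least depth.\<close>

lemma connected_subset_top:
  assumes SI: "S \<subseteq> I" and "S \<noteq> {}" and S: "connected_set A S"
  shows "\<exists>\<tau>. \<tau> \<in> S \<and> (\<forall>s\<in>S. below \<tau> s) \<and> (\<forall>s\<in>S. s \<noteq> \<tau> \<longrightarrow> parent s \<in> S)"
proof -
  obtain \<tau> where \<tau>: "\<tau> \<in> S" "\<And>s. s \<in> S \<Longrightarrow> depth \<tau> \<le> depth s"
    using ex_has_least_nat[of "\<lambda>s. s \<in> S" _ depth] \<open>S \<noteq> {}\<close> by blast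
  have \<tau>I: "\<tau> \<in> I" using \<tau>(1) SI by blast
  have top: "parent \<tau> \<notin> S \<or> \<tau> = root"
  proof (cases "\<tau> = root")
    case False
    then have "depth (parent \<tau>) < depth \<tau>" using parent_edge(2)[OF \<tau>I] by simp
    then show ?thesis using \<tau>(2) by (meson not_le)
  qed simp
  have below: "below \<tau> s" if s: "s \<in> S" for s
  proof -
    obtain w where w: "is_walk A w" "hd w = \<tau>" "last w = s" "set w \<subseteq> S"
      using S \<tau>(1) s unfolding connected_set_def by blast
    have "w \<noteq> []" using w(1) by auto
    then have "s \<in> set w" using w(3) by (metis last_in_set)
    then show ?thesis using walk_below[OF w(1,4,2) \<tau>I top] by blast
  qed
  have "parent s \<in> S" if s: "s \<in> S" "s \<noteq> \<tau>" for s
  proof (rule ccontr)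
    assume "parent s \<notin> S"
    moreover obtain w where w: "is_walk A w" "hd w = s" "last w = \<tau>" "set w \<subseteq> S"
      using S \<tau>(1) s(1) unfolding connected_set_def by blast
    moreover have "w \<noteq> []" using w(1) by auto
    then have "\<tau> \<in> set w" using w(3) by (metis last_in_set)
    ultimately have "below s \<tau>" using walk_below[OF w(1,4,2)] SI s(1) by blast
    then show False using below[OF s(1)] s(2) by (auto simp: below_def)
  qed
  then show ?thesis using \<tau>(1) below by blast
qed

end

section \<open>Tree-decompositions yield elimination orders\<close>

locale rooted_tree_decomposition = rooted_tree I A root
  for I :: "'t set" and A :: "'t \<Rightarrow> 't \<Rightarrow> bool" and root :: 't +
  fixes V :: "nat set" and E :: "nat \<Rightarrow> nat \<Rightarrow> bool" and B :: "'t \<Rightarrow> nat set" and k :: nat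
  assumes decomposition: "tree_decomposition V E I A B" and width: "width_le I B k"
    and graph: "simple_graph V E"
begin

definition bags_of :: "nat \<Rightarrow> 't set" where
  "bags_of v = {t \<in> I. v \<in> B t}"

definition top_node :: "nat \<Rightarrow> 't" where
  "top_node v = (SOME \<tau>. \<tau> \<in> bags_of v \<and> (\<forall>s\<in>bags_of v. below \<tau> s) \<and>
                          (\<forall>s\<in>bags_of v. s \<noteq> \<tau> \<longrightarrow> parent s \<in> bags_of v))"

lemma top_node:
  assumes "v \<in> V"
  shows "top_node v \<in> bags_of v" "\<And>s. s \<in> bags_of v \<Longrightarrow> below (top_node v) s"
    "\<And>s. s \<in> bags_of v \<Longrightarrow> s \<noteq> top_node v \<Longrightarrow> parent s \<in> bags_of v"
proof -
  have "bags_of v \<subseteq> I" "bags_of v \<noteq> {}" "connected_set A (bags_of v)"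
    using decomposition assms by (auto simp: tree_decomposition_def bags_of_def)
  from someI_ex[OF connected_subset_top[OF this]]
  show "top_node v \<in> bags_of v" "\<And>s. s \<in> bags_of v \<Longrightarrow> below (top_node v) s"
    "\<And>s. s \<in> bags_of v \<Longrightarrow> s \<noteq> top_node v \<Longrightarrow> parent s \<in> bags_of v"
    unfolding top_node_def by blast+
qed

definition share_bag :: "nat \<Rightarrow> nat \<Rightarrow> bool" where
  "share_bag u v \<longleftrightarrow> u \<noteq> v \<and> (\<exists>t\<in>I. u \<in> B t \<and> v \<in> B t)"

definition rank :: "nat \<Rightarrow> nat" where
  "rank v = depth (top_node v)"

definition before :: "nat \<Rightarrow> nat \<Rightarrow> bool" where
  "before u v \<longleftrightarrow> rank u < rank v \<or> rank u = rank v \<and> u < v"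

lemma bag_subset: "t \<in> I \<Longrightarrow> B t \<subseteq> V"
  using decomposition by (simp add: tree_decomposition_def)

text \<open>If u and v share the bag s, the bags of u contain the ancestors of s down to depth
  rank u, among them the ancestor top_node v of s at depth rank v.\<close>

lemma share_bag_top_node:
  assumes uv: "share_bag u v" and le: "rank u \<le> rank v"
  shows "u \<in> B (top_node v)"
proof -
  obtain s where s: "s \<in> I" "u \<in> B s" "v \<in> B s" using uv by (auto simp: share_bag_def)
  have uV: "u \<in> V" and vV: "v \<in> V" using bag_subset s by auto
  have su: "s \<in> bags_of u" and sv: "s \<in> bags_of v" using s by (auto simp: bags_of_def)
  have "rank u \<le> depth s" using top_node(2)[OF uV su] by (simp add: below_def rank_def)
  have up: "ancestor j s \<in> bags_of u" if "j \<le> depth s - rank u" for j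
    using that
  proof (induction j)
    case (Suc j)
    have "depth (ancestor j s) = depth s - j" using ancestor_in_depth s(1) Suc.prems by simp
    then have "ancestor j s \<noteq> top_node u"
      using Suc.prems \<open>rank u \<le> depth s\<close> by (auto simp: rank_def)
    then show ?case using top_node(3)[OF uV] Suc by (simp add: ancestor_Suc)
  qed (use su in simp)
  have "ancestor (depth s - rank v) s = top_node v"
    using top_node(2)[OF vV sv] by (simp add: below_def rank_def)
  then have "top_node v \<in> bags_of u" using up[of "depth s - rank v"] le by simp
  then show ?thesis by (simp add: bags_of_def)
qed

lemma simple_graph_share_bag: "simple_graph V share_bag"
  using bag_subset unfolding simple_graph_def share_bag_def by blast

lemma E_share_bag: "E u v \<Longrightarrow> share_bag u v"
  using graph decomposition by (auto simp: simple_graph_def tree_decomposition_def share_bag_def)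

lemma wf_before: "wf {(u, v). before u v}"
proof -
  have "{(u, v). before u v} = inv_image (less_than <*lex*> less_than) (\<lambda>v. (rank v, v))"
    by (auto simp: before_def)
  then show ?thesis by (simp add: wf_lex_prod)
qed

lemma before_total: "u \<noteq> v \<Longrightarrow> before u v \<or> before v u"
  by (auto simp: before_def)

lemma elimination_order_share_bag: "elimination_order V share_bag before k"
  unfolding elimination_order_def
proof (rule ballI, intro conjI)
  fix v assume v: "v \<in> V"
  let ?N = "back_nbrs share_bag before v"
  have top: "top_node v \<in> I" "v \<in> B (top_node v)" using top_node(1)[OF v] by (auto simp: bags_of_def)
  have sub: "?N \<subseteq> B (top_node v) - {v}"
  proof
    fix u assume "u \<in> ?N"
    then have uv: "share_bag u v" "rank u \<le> rank v" by (auto simp: back_nbrs_def before_def)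
    then show "u \<in> B (top_node v) - {v}"
      using share_bag_top_node[OF uv] by (simp add: share_bag_def)
  qed
  have fin: "finite (B (top_node v))" "card (B (top_node v)) \<le> k + 1"
    using width top(1) by (auto simp: width_le_def)
  show "finite ?N" using sub fin(1) by (auto intro: finite_subset)
  have "card ?N \<le> card (B (top_node v) - {v})" using sub fin(1) by (intro card_mono) auto
  then show "card ?N \<le> k" using top(2) fin by simp
  show "\<forall>a\<in>?N. \<forall>b\<in>?N. a \<noteq> b \<longrightarrow> share_bag a b"
    using sub top(1) by (auto simp: share_bag_def)
qed

end

lemma elimination_order_if_treewidth_le:
  fixes V :: "nat set"
  assumes "simple_graph V E" "treewidth_le V E k"
  obtains H before where "simple_graph V H" "\<And>u v. E u v \<Longrightarrow> H u v"
    "wf {(u, v). before u v}" "\<And>u v. u \<noteq> v \<Longrightarrow> before u v \<or> before v u"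
    "elimination_order V H before k"
proof -
  obtain I :: "nat set" and A B where td: "tree_decomposition V E I A B" and "width_le I B k"
    using assms(2) unfolding treewidth_le_def by blast
  moreover obtain root where "root \<in> I" using td by (auto simp: tree_decomposition_def is_tree_def)
  ultimately interpret rooted_tree_decomposition I A root V E B k
    using assms(1) by unfold_locales (auto simp: tree_decomposition_def)
  show ?thesis
    using that simple_graph_share_bag E_share_bag wf_before before_total elimination_order_share_bag
    by blast
qed

theorem mainTheorem13:
  fixes k :: nat
  shows "\<exists>(W::nat set) F. simple_graph W F \<and> treewidth_le W F k \<and>
           (\<forall>(V::nat set) E. simple_graph V E \<and> treewidth_le V E k
               \<longrightarrow> induced_subgraph_of V E W F)"
proof (intro exI conjI allI impI)
  show "simple_graph (univ_V k) (univ_E k)" by (rule simple_graph_univ_E)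
  show "treewidth_le (univ_V k) (univ_E k) k" by (rule treewidth_le_univ)
  fix V :: "nat set" and E assume "simple_graph V E \<and> treewidth_le V E k"
  then have E: "simple_graph V E" "treewidth_le V E k" by blast+
  then obtain H before where "simple_graph V H" "\<And>u v. E u v \<Longrightarrow> H u v"
    "wf {(u, v). before u v}" "\<And>u v. u \<noteq> v \<Longrightarrow> before u v \<or> before v u"
    "elimination_order V H before k"
    by (rule elimination_order_if_treewidth_le) blast
  then show "induced_subgraph_of V E (univ_V k) (univ_E k)"
    by (rule induced_subgraph_of_univ_if_elimination_order[OF E(1)])
qed

end
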